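(* Let $\kappa_{\mathrm{charge}(3)}$ denote the growth rate of the charge(3) model and $\kappa_{Q\text{-charge}}$ the growth rate of the $Q$-charge model on the square lattice, as defined in the context. Then $\kappa_{\mathrm{charge}(3)} = \kappa_{Q\text{-charge}}$.
   Context: Work on the finite square lattice $[1,N]^2\subset\mathbb{Z}^2$, whose $N^2$ vertices carry spins $\oplus=+1$ or $\ominus=-1$. A spin configuration satisfies the charge(3) constraint if for every horizontal or vertical segment of consecutive vertices, the sum of the spins along that segment lies between $-3$ and $+3$. Let $Z^{\mathrm{ch}}_N$ be the number of charge(3) configurations on $[1,N]^2$. The $Q$-charge model places states on the bonds of $[1,N]^2$, including boundary bonds (so every vertex has exactly four incident bonds: north, west, east, south). Each bond state is an integer in $\{0,1,2,3\}$. A labelling is valid if at every vertex with north bond state $a$, west bond state $b$, east bond state $c$ and south bond state $d$, one has $d-a=c-b=\pm 1$ (both differences equal to the same value $+1$ or $-1$). Let $Z^{Q}_N$ be the number of valid $Q$-charge labellings. (Intuitively, the state of a horizontal (resp. vertical) bond is the cumulative charge after reading the spin to its west (resp. north), so a charge(3) configuration maps to one or more $Q$-charge configurations.) The growth rate of a model is $\kappa=\lim_{N\to\infty} Z_N^{1/N^2}$, where $Z_N$ is its number of valid configurations on $[1,N]^2$ (these limits are taken to exist). *)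

theory Defs
  imports Complex_Main "HOL-Library.FuncSet"
begin

text \<open>Vertices of [1,N]^2: pairs (i,j), i = row (increasing southwards), j = column
  (increasing eastwards).\<close>
definition grid :: "nat \<Rightarrow> (nat \<times> nat) set" where
  "grid N = {1..N} \<times> {1..N}"

definition charge3 :: "nat \<Rightarrow> (nat \<times> nat \<Rightarrow> int) \<Rightarrow> bool" where
  "charge3 N \<sigma> \<longleftrightarrow>
     (\<forall>i\<in>{1..N}. \<forall>j1 j2. 1 \<le> j1 \<and> j1 \<le> j2 \<and> j2 \<le> N \<longrightarrow>
        \<bar>\<Sum>j=j1..j2. \<sigma> (i, j)\<bar> \<le> 3) \<and>
     (\<forall>j\<in>{1..N}. \<forall>i1 i2. 1 \<le> i1 \<and> i1 \<le> i2 \<and> i2 \<le> N \<longrightarrow>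
        \<bar>\<Sum>i=i1..i2. \<sigma> (i, j)\<bar> \<le> 3)"

definition Zch :: "nat \<Rightarrow> nat" where
  "Zch N = card {\<sigma> \<in> grid N \<rightarrow>\<^sub>E {1, -1::int}. charge3 N \<sigma>}"

text \<open>Horizontal bond (i,j), i \<in> [1,N], j \<in> [0,N], joins vertex (i,j) to (i,j+1)
  (j = 0 and j = N are the west/east boundary bonds). Vertical bond (i,j), i \<in> [0,N],
  j \<in> [1,N], joins vertex (i,j) to (i+1,j) (i = 0, i = N are north/south boundary bonds).
  So vertex (i,j) has north bond v(i-1,j), south bond v(i,j), west bond h(i,j-1),
  east bond h(i,j).\<close>
definition hbonds :: "nat \<Rightarrow> (nat \<times> nat) set" where
  "hbonds N = {1..N} \<times> {0..N}"

definition vbonds :: "nat \<Rightarrow> (nat \<times> nat) set" where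
  "vbonds N = {0..N} \<times> {1..N}"

definition qvalid :: "nat \<Rightarrow> (nat \<times> nat \<Rightarrow> int) \<Rightarrow> (nat \<times> nat \<Rightarrow> int) \<Rightarrow> bool" where
  "qvalid N h v \<longleftrightarrow>
     (\<forall>(i, j)\<in>grid N.
        let a = v (i - 1, j); b = h (i, j - 1); c = h (i, j); d = v (i, j)
        in d - a = c - b \<and> (d - a = 1 \<or> d - a = -1))"

definition ZQ :: "nat \<Rightarrow> nat" where
  "ZQ N = card {(h, v). h \<in> hbonds N \<rightarrow>\<^sub>E {0..3::int} \<and> v \<in> vbonds N \<rightarrow>\<^sub>E {0..3::int}
                        \<and> qvalid N h v}"

end

theory Submission
  imports Defs "HOL-Real_Asymp.Real_Asymp"
begin

text \<open>Reading a Q-charge labelling along a row or column, consecutive bond states differ by the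
  spin in between, so every labelling determines a spin configuration whose segment sums are
  differences of two states in \<open>{0..3}\<close>, i.e. a charge(3) configuration. Conversely every
  charge(3) configuration arises this way: along each line take the prefix sums shifted by their
  minimum. A labelling is recovered from its spins and its \<open>2N\<close> west and north boundary states,
  so \<open>Zch N \<le> ZQ N \<le> 16^N Zch N\<close>, and the factor \<open>16^N\<close> disappears under the \<open>N\<^sup>2\<close>-th root.\<close>

lemma sum_increments_telescope:
  fixes f :: "nat \<Rightarrow> 'a::ab_group_add"
  assumes "1 \<le> a" "a \<le> b"
  shows "(\<Sum>k=a..b. f k - f (k - 1)) = f b - f (a - 1)"
proof -
  obtain a' b' where ab: "a = Suc a'" "b = Suc b'"
    using assms by (metis Suc_le_D One_nat_def)
  have "(\<Sum>k=a..b. f k - f (k - 1)) = (\<Sum>i=a'..b'. f (Suc i) - f i)"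
    unfolding ab sum.shift_bounds_cl_Suc_ivl by simp
  also have "\<dots> = f b - f (a - 1)"
    using assms ab by (simp add: sum_Suc_diff)
  finally show ?thesis .
qed

lemma segment_sums_bounded_if_potential_bounded:
  fixes f :: "nat \<Rightarrow> int"
  assumes "\<And>k. k \<le> N \<Longrightarrow> f k \<in> {0..c}" "1 \<le> a" "a \<le> b" "b \<le> N"
  shows "\<bar>\<Sum>k=a..b. f k - f (k - 1)\<bar> \<le> c"
proof -
  have "f b \<in> {0..c}" "f (a - 1) \<in> {0..c}"
    using assms by auto
  then show ?thesis
    using sum_increments_telescope[OF assms(2,3), of f] by auto
qed

lemma eq_if_same_increments:
  fixes f f' :: "nat \<Rightarrow> 'a::ab_group_add"
  assumes "f 0 = f' 0"
    and "\<And>k. 1 \<le> k \<Longrightarrow> k \<le> N \<Longrightarrow> f k - f (k - 1) = f' k - f' (k - 1)"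
    and "k \<le> N"
  shows "f k = f' k"
  using assms(3)
proof (induction k)
  case 0
  show ?case by (rule assms(1))
next
  case (Suc k)
  then have "f (Suc k) - f k = f' (Suc k) - f' k"
    using assms(2)[of "Suc k"] by simp
  with Suc show ?case by (simp add: eq_diff_eq)
qed

definition cumulative_charge :: "nat \<Rightarrow> (nat \<Rightarrow> int) \<Rightarrow> nat \<Rightarrow> int" where
  "cumulative_charge N g j = (\<Sum>k=1..j. g k) - Min ((\<lambda>j. \<Sum>k=1..j. g k) ` {0..N})"

lemma cumulative_charge_increment:
  assumes "1 \<le> j"
  shows "cumulative_charge N g j - cumulative_charge N g (j - 1) = g j"
proof -
  have "(\<Sum>k=1..j. g k) = (\<Sum>k=1..j - 1. g k) + g j"
    using assms by (cases j) auto
  then show ?thesis unfolding cumulative_charge_def by linarith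
qed

lemma prefix_sums_close:
  fixes g :: "nat \<Rightarrow> int"
  assumes segments: "\<And>a b. 1 \<le> a \<Longrightarrow> a \<le> b \<Longrightarrow> b \<le> N \<Longrightarrow> \<bar>\<Sum>k=a..b. g k\<bar> \<le> c"
    and "0 \<le> c" "j \<le> N" "j' \<le> N"
  shows "(\<Sum>k=1..j. g k) - (\<Sum>k=1..j'. g k) \<le> c"
proof -
  define P where "P j = (\<Sum>k=1..j. g k)" for j
  have P_increment: "P k - P (k - 1) = g k" if "1 \<le> k" for k
    using that unfolding P_def by (cases k) auto
  have diff: "\<bar>P l - P l'\<bar> \<le> c" if "l' < l" "l \<le> N" for l l'
  proof -
    have "P l - P l' = (\<Sum>k=Suc l'..l. P k - P (k - 1))"
      using sum_increments_telescope[of "Suc l'" l P] that by simp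
    also have "\<dots> = (\<Sum>k=Suc l'..l. g k)"
      by (rule sum.cong[OF refl], rule P_increment) simp
    finally show ?thesis using segments[of "Suc l'" l] that by simp
  qed
  show ?thesis
    using diff[of j' j] diff[of j j'] assms(2-4) unfolding P_def
    by (cases j' j rule: linorder_cases) auto
qed

lemma cumulative_charge_bounded:
  fixes g :: "nat \<Rightarrow> int"
  assumes "\<And>a b. 1 \<le> a \<Longrightarrow> a \<le> b \<Longrightarrow> b \<le> N \<Longrightarrow> \<bar>\<Sum>k=a..b. g k\<bar> \<le> c"
    and "0 \<le> c" "j \<le> N"
  shows "cumulative_charge N g j \<in> {0..c}"
proof -
  let ?S = "(\<lambda>j. \<Sum>k=1..j. g k) ` {0..N}"
  have "Min ?S \<in> ?S"
    by (intro Min_in) auto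
  then obtain j' where j': "j' \<le> N" "Min ?S = (\<Sum>k=1..j'. g k)"
    by (auto simp del: Min_in)
  have "Min ?S \<le> (\<Sum>k=1..j. g k)"
    using assms(3) by (intro Min_le) auto
  then show ?thesis
    using prefix_sums_close[OF assms(1,2,3) j'(1)] j'(2) unfolding cumulative_charge_def by simp
qed

definition qconfigs :: "nat \<Rightarrow> ((nat \<times> nat \<Rightarrow> int) \<times> (nat \<times> nat \<Rightarrow> int)) set" where
  "qconfigs N = {(h, v). h \<in> hbonds N \<rightarrow>\<^sub>E {0..3} \<and> v \<in> vbonds N \<rightarrow>\<^sub>E {0..3} \<and> qvalid N h v}"

definition charge3_configs :: "nat \<Rightarrow> (nat \<times> nat \<Rightarrow> int) set" where
  "charge3_configs N = {\<sigma> \<in> grid N \<rightarrow>\<^sub>E {1, -1}. charge3 N \<sigma>}"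

definition spins_of :: "nat \<Rightarrow> (nat \<times> nat \<Rightarrow> int) \<Rightarrow> nat \<times> nat \<Rightarrow> int" where
  "spins_of N v = (\<lambda>(i, j)\<in>grid N. v (i, j) - v (i - 1, j))"

lemma qconfig_increments:
  assumes "(h, v) \<in> qconfigs N" "(i, j) \<in> grid N"
  shows "h (i, j) - h (i, j - 1) = spins_of N v (i, j)"
    and "v (i, j) - v (i - 1, j) = spins_of N v (i, j)"
    and "spins_of N v (i, j) \<in> {1, -1}"
  using assms unfolding qconfigs_def qvalid_def spins_of_def by (fastforce simp: Let_def)+

lemma spins_of_qconfig:
  assumes q: "(h, v) \<in> qconfigs N"
  shows "spins_of N v \<in> charge3_configs N"
proof -
  have h_range: "h (i, j) \<in> {0..3}" if "i \<in> {1..N}" "j \<le> N" for i j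
    using q that unfolding qconfigs_def hbonds_def by auto
  have v_range: "v (i, j) \<in> {0..3}" if "j \<in> {1..N}" "i \<le> N" for i j
    using q that unfolding qconfigs_def vbonds_def by auto
  have "spins_of N v \<in> grid N \<rightarrow>\<^sub>E {1, -1}"
    using qconfig_increments(3)[OF q] unfolding spins_of_def by auto
  moreover have "\<bar>\<Sum>j=j1..j2. spins_of N v (i, j)\<bar> \<le> 3"
    if "i \<in> {1..N}" "1 \<le> j1" "j1 \<le> j2" "j2 \<le> N" for i j1 j2
  proof -
    have "(\<Sum>j=j1..j2. spins_of N v (i, j)) = (\<Sum>j=j1..j2. h (i, j) - h (i, j - 1))"
    proof (rule sum.cong[OF refl])
      fix j assume "j \<in> {j1..j2}"
      then show "spins_of N v (i, j) = h (i, j) - h (i, j - 1)"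
        using that qconfig_increments(1)[OF q, of i j] by (simp add: grid_def)
    qed
    then show ?thesis
      using segment_sums_bounded_if_potential_bounded[of N "\<lambda>j. h (i, j)"] h_range that by simp
  qed
  moreover have "\<bar>\<Sum>i=i1..i2. spins_of N v (i, j)\<bar> \<le> 3"
    if "j \<in> {1..N}" "1 \<le> i1" "i1 \<le> i2" "i2 \<le> N" for j i1 i2
  proof -
    have "(\<Sum>i=i1..i2. spins_of N v (i, j)) = (\<Sum>i=i1..i2. v (i, j) - v (i - 1, j))"
    proof (rule sum.cong[OF refl])
      fix i assume "i \<in> {i1..i2}"
      then show "spins_of N v (i, j) = v (i, j) - v (i - 1, j)"
        using that qconfig_increments(2)[OF q, of i j] by (simp add: grid_def)
    qed
    then show ?thesis
      using segment_sums_bounded_if_potential_bounded[of N "\<lambda>i. v (i, j)"] v_range that by simp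
  qed
  ultimately show ?thesis unfolding charge3_configs_def charge3_def by blast
qed

lemma qconfig_of_charge3:
  assumes "\<sigma> \<in> charge3_configs N"
  shows "\<exists>(h, v)\<in>qconfigs N. spins_of N v = \<sigma>"
proof -
  have spins: "\<sigma> \<in> grid N \<rightarrow>\<^sub>E {1, -1}" and ch: "charge3 N \<sigma>"
    using assms unfolding charge3_configs_def by auto
  define h where "h = (\<lambda>(i, j)\<in>hbonds N. cumulative_charge N (\<lambda>k. \<sigma> (i, k)) j)"
  define v where "v = (\<lambda>(i, j)\<in>vbonds N. cumulative_charge N (\<lambda>k. \<sigma> (k, j)) i)"
  have "h \<in> hbonds N \<rightarrow>\<^sub>E {0..3}"
    using ch unfolding h_def hbonds_def charge3_def
    by (auto intro!: cumulative_charge_bounded)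
  moreover have "v \<in> vbonds N \<rightarrow>\<^sub>E {0..3}"
    using ch unfolding v_def vbonds_def charge3_def
    by (auto intro!: cumulative_charge_bounded)
  moreover have h_incr: "h (i, j) - h (i, j - 1) = \<sigma> (i, j)"
    and v_incr: "v (i, j) - v (i - 1, j) = \<sigma> (i, j)" if "(i, j) \<in> grid N" for i j
    using that cumulative_charge_increment[of j N "\<lambda>k. \<sigma> (i, k)"]
      cumulative_charge_increment[of i N "\<lambda>k. \<sigma> (k, j)"]
    unfolding h_def v_def grid_def hbonds_def vbonds_def by auto
  moreover have "qvalid N h v"
    using spins h_incr v_incr unfolding qvalid_def Let_def by fastforce
  moreover have "spins_of N v = \<sigma>"
  proof
    fix p show "spins_of N v p = \<sigma> p"
  proof (cases "p \<in> grid N")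
    case True
    then obtain i j where "p = (i, j)" "(i, j) \<in> grid N" by (cases p) auto
    then show ?thesis using v_incr[of i j] unfolding spins_of_def by simp
  next
    case False
    then show ?thesis using PiE_arb[OF spins False] unfolding spins_of_def by simp
  qed
  qed
  ultimately show ?thesis unfolding qconfigs_def by blast
qed

definition spins_and_boundary ::
  "nat \<Rightarrow> (nat \<times> nat \<Rightarrow> int) \<times> (nat \<times> nat \<Rightarrow> int)
     \<Rightarrow> (nat \<times> nat \<Rightarrow> int) \<times> (nat \<Rightarrow> int) \<times> (nat \<Rightarrow> int)" where
  "spins_and_boundary N = (\<lambda>(h, v). (spins_of N v, \<lambda>i\<in>{1..N}. h (i, 0), \<lambda>j\<in>{1..N}. v (0, j)))"

lemma inj_on_spins_and_boundary: "inj_on (spins_and_boundary N) (qconfigs N)"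
proof (rule inj_onI, clarify)
  fix h v h' v'
  assume q: "(h, v) \<in> qconfigs N" and q': "(h', v') \<in> qconfigs N"
    and eq: "spins_and_boundary N (h, v) = spins_and_boundary N (h', v')"
  have labels: "h \<in> hbonds N \<rightarrow>\<^sub>E {0..3}" "h' \<in> hbonds N \<rightarrow>\<^sub>E {0..3}"
    "v \<in> vbonds N \<rightarrow>\<^sub>E {0..3}" "v' \<in> vbonds N \<rightarrow>\<^sub>E {0..3}"
    using q q' unfolding qconfigs_def by auto
  have spins: "spins_of N v = spins_of N v'"
    using eq unfolding spins_and_boundary_def by simp
  have west: "h (i, 0) = h' (i, 0)" if "i \<in> {1..N}" for i
    using eq that unfolding spins_and_boundary_def by (auto dest: fun_cong[where x = i])
  have north: "v (0, j) = v' (0, j)" if "j \<in> {1..N}" for j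
    using eq that unfolding spins_and_boundary_def by (auto dest: fun_cong[where x = j])
  have "h p = h' p" for p
  proof (cases "p \<in> hbonds N")
    case True
    then obtain i j where "p = (i, j)" "i \<in> {1..N}" "j \<le> N" unfolding hbonds_def by auto
    then show ?thesis
      using eq_if_same_increments[of "\<lambda>j. h (i, j)" "\<lambda>j. h' (i, j)" N j] west spins
        qconfig_increments(1)[OF q] qconfig_increments(1)[OF q']
      by (simp add: grid_def)
  next
    case False
    then show ?thesis using PiE_arb[OF labels(1) False] PiE_arb[OF labels(2) False] by simp
  qed
  moreover have "v p = v' p" for p
  proof (cases "p \<in> vbonds N")
    case True
    then obtain i j where "p = (i, j)" "j \<in> {1..N}" "i \<le> N" unfolding vbonds_def by auto
    then show ?thesis
      using eq_if_same_increments[of "\<lambda>i. v (i, j)" "\<lambda>i. v' (i, j)" N i] north spins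
        qconfig_increments(2)[OF q] qconfig_increments(2)[OF q']
      by (simp add: grid_def)
  next
    case False
    then show ?thesis using PiE_arb[OF labels(3) False] PiE_arb[OF labels(4) False] by simp
  qed
  ultimately show "h = h' \<and> v = v'" by blast
qed

lemma finite_qconfigs: "finite (qconfigs N)"
proof (rule finite_subset)
  show "qconfigs N \<subseteq> (hbonds N \<rightarrow>\<^sub>E {0..3}) \<times> (vbonds N \<rightarrow>\<^sub>E {0..3})"
    unfolding qconfigs_def by auto
  show "finite ((hbonds N \<rightarrow>\<^sub>E {0..3::int}) \<times> (vbonds N \<rightarrow>\<^sub>E {0..3::int}))"
    unfolding hbonds_def vbonds_def by (intro finite_cartesian_product finite_PiE) auto
qed

lemma finite_charge3_configs: "finite (charge3_configs N)"
proof (rule finite_subset)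
  show "charge3_configs N \<subseteq> grid N \<rightarrow>\<^sub>E {1, -1}"
    unfolding charge3_configs_def by auto
  show "finite (grid N \<rightarrow>\<^sub>E {1, -1::int})"
    unfolding grid_def by (intro finite_PiE) auto
qed

lemma Zch_le_ZQ: "Zch N \<le> ZQ N"
proof -
  have "charge3_configs N \<subseteq> (\<lambda>(h, v). spins_of N v) ` qconfigs N"
    using qconfig_of_charge3 by fast
  then have "card (charge3_configs N) \<le> card ((\<lambda>(h, v). spins_of N v) ` qconfigs N)"
    using finite_qconfigs by (intro card_mono) auto
  also have "\<dots> \<le> card (qconfigs N)"
    using finite_qconfigs by (rule card_image_le)
  finally show ?thesis
    unfolding Zch_def ZQ_def charge3_configs_def qconfigs_def .
qed

lemma ZQ_le_Zch: "ZQ N \<le> 16 ^ N * Zch N"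
proof -
  let ?B = "{1..N} \<rightarrow>\<^sub>E {0..3::int}"
  have "spins_and_boundary N ` qconfigs N \<subseteq> charge3_configs N \<times> ?B \<times> ?B"
    using spins_of_qconfig unfolding spins_and_boundary_def qconfigs_def hbonds_def vbonds_def
    by fastforce
  then have "card (qconfigs N) \<le> card (charge3_configs N \<times> ?B \<times> ?B)"
    using finite_charge3_configs
    by (intro card_inj_on_le[OF inj_on_spins_and_boundary] finite_cartesian_product finite_PiE)
      auto
  also have "\<dots> = 16 ^ N * card (charge3_configs N)"
    by (simp add: card_cartesian_product card_PiE flip: power_mult_distrib)
  finally show ?thesis
    unfolding Zch_def ZQ_def charge3_configs_def qconfigs_def .
qed

lemma root_growth_rates_eq:
  fixes a b :: "nat \<Rightarrow> real" and C x y :: real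
  assumes "\<And>N. 0 \<le> a N" "\<And>N. a N \<le> b N" "\<And>N. b N \<le> C ^ N * a N" "0 < C"
    and "(\<lambda>N. a N powr (1 / real (N\<^sup>2))) \<longlonglongrightarrow> x"
    and "(\<lambda>N. b N powr (1 / real (N\<^sup>2))) \<longlonglongrightarrow> y"
  shows "x = y"
proof -
  have "(\<lambda>N. C powr (1 / real N)) \<longlonglongrightarrow> 1"
    using \<open>0 < C\<close> by real_asymp
  have lower: "a N powr (1 / real (N\<^sup>2)) \<le> b N powr (1 / real (N\<^sup>2))" for N
    using assms(1,2) by (rule powr_mono2[rotated 1]) simp
  have upper: "b N powr (1 / real (N\<^sup>2)) \<le> C powr (1 / real N) * a N powr (1 / real (N\<^sup>2))"
    if "N \<ge> 1" for N
  proof -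
    have "b N powr (1 / real (N\<^sup>2)) \<le> (C ^ N * a N) powr (1 / real (N\<^sup>2))"
      using assms(1-3) by (intro powr_mono2) (auto intro: order_trans)
    also have "\<dots> = (C powr real N) powr (1 / real (N\<^sup>2)) * a N powr (1 / real (N\<^sup>2))"
      using assms(1,4) by (simp add: powr_mult powr_realpow)
    also have "(C powr real N) powr (1 / real (N\<^sup>2)) = C powr (1 / real N)"
      using that by (simp add: powr_powr power2_eq_square)
    finally show ?thesis .
  qed
  have "x \<le> y"
    using lower by (intro LIMSEQ_le[OF assms(5,6)]) auto
  moreover have "y \<le> 1 * x"
    using upper by (intro LIMSEQ_le[OF assms(6) tendsto_mult[OF \<open>_ \<longlonglongrightarrow> 1\<close> assms(5)]]) auto
  ultimately show ?thesis by simp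
qed

theorem mainTheorem1:
  fixes \<kappa>ch \<kappa>Q :: real
  assumes "(\<lambda>N. real (Zch N) powr (1 / real (N ^ 2))) \<longlonglongrightarrow> \<kappa>ch"
      and "(\<lambda>N. real (ZQ N) powr (1 / real (N ^ 2))) \<longlonglongrightarrow> \<kappa>Q"
  shows "\<kappa>ch = \<kappa>Q"
proof (rule root_growth_rates_eq[OF _ _ _ _ assms])
  show "real (Zch N) \<le> real (ZQ N)" for N
    using Zch_le_ZQ by simp
  show "real (ZQ N) \<le> 16 ^ N * real (Zch N)" for N
  proof -
    have "real (ZQ N) \<le> real (16 ^ N * Zch N)"
      using ZQ_le_Zch by (simp only: of_nat_le_iff)
    then show ?thesis by simp
  qed
qed auto

end
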